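(* For each $k\in\mathbb{N}$ let $f_{n,k}$ be the number of forkless monomials $\mathfrak{m}\in\mathfrak{M}$ of total degree $k$. Then, as formal power series in $\mathbb{Z}[[t]]$, $$\sum_{k\in\mathbb{N}}f_{n,k}t^k=\frac{(1+0t)(1+1t)\cdots(1+(n-2)t)}{(1-t)^{n-1}}.$$
   Context: Let $n$ be a positive integer and $\mathbb{N}=\{0,1,2,\dots\}$. Let $\mathfrak{M}$ be the set of monomials in the indeterminates $x_{i,j}$, $1\le i<j\le n$. A monomial $\mathfrak{m}\in\mathfrak{M}$ is forkless if there is no triple $1\le i<j<k\le n$ with $x_{i,j}x_{i,k}\mid\mathfrak{m}$. *)

theory Defs
  imports "HOL-Computational_Algebra.Formal_Power_Series"
begin

text \<open>Indeterminates x_{i,j}, 1 <= i < j <= n, indexed by the pair (i,j).\<close>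
definition var_index :: "nat \<Rightarrow> (nat \<times> nat) set" where
  "var_index n = {(i, j). 1 \<le> i \<and> i < j \<and> j \<le> n}"

text \<open>A monomial in these indeterminates is its exponent vector: a function
  nat \<times> nat \<Rightarrow> nat vanishing outside the index set.\<close>
definition monomials :: "nat \<Rightarrow> (nat \<times> nat \<Rightarrow> nat) set" where
  "monomials n = {e. \<forall>p. p \<notin> var_index n \<longrightarrow> e p = 0}"

definition total_degree :: "nat \<Rightarrow> (nat \<times> nat \<Rightarrow> nat) \<Rightarrow> nat" where
  "total_degree n e = (\<Sum>p\<in>var_index n. e p)"

definition forkless :: "nat \<Rightarrow> (nat \<times> nat \<Rightarrow> nat) \<Rightarrow> bool" where
  "forkless n e \<longleftrightarrow> \<not> (\<exists>i j k. 1 \<le> i \<and> i < j \<and> j < k \<and> k \<le> n \<and>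
       e (i, j) \<ge> 1 \<and> e (i, k) \<ge> 1)"

definition f_count :: "nat \<Rightarrow> nat \<Rightarrow> nat" where
  "f_count n k = card {e \<in> monomials n. forkless n e \<and> total_degree n e = k}"

end

theory Submission
  imports Defs
begin

text \<open>A monomial is forkless exactly when every row \<open>i\<close> contributes at most one variable
  \<open>x\<^sub>i\<^sub>j\<close>. Adjoining the rows one at a time, row \<open>i\<close> is either empty or carries a single
  power \<open>x\<^sub>i\<^sub>j\<^sup>a\<close> with one of the \<open>n - i\<close> columns \<open>j > i\<close> and \<open>a \<ge> 1\<close>; on generating functions
  this multiplies by \<open>1 + (n - i) t / (1 - t) = (1 + (n - i - 1) t) / (1 - t)\<close>. The product over
  the rows \<open>i = 1, \<dots>, n - 1\<close> is the claimed formula.\<close>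

lemma finite_var_index: "finite (var_index n)"
  by (rule finite_subset[of _ "{..n} \<times> {..n}"]) (auto simp: var_index_def)

lemma monomial_support:
  assumes "e \<in> monomials n" "e p \<noteq> 0"
  shows "p \<in> var_index n"
proof -
  have "\<forall>q. q \<notin> var_index n \<longrightarrow> e q = 0"
    using assms(1) unfolding monomials_def by (rule CollectD)
  then have "p \<notin> var_index n \<longrightarrow> e p = 0"
    by (rule spec)
  then show ?thesis
    using assms(2) by blast
qed

lemma forkless_row_unique:
  assumes "e \<in> monomials n" "forkless n e" "e (i, j) \<noteq> 0" "e (i, j') \<noteq> 0"
  shows "j = j'"
proof -
  have fork: False if "a < b" "e (i, a) \<noteq> 0" "e (i, b) \<noteq> 0" for a b
  proof -
    have "(i, a) \<in> var_index n" "(i, b) \<in> var_index n"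
      using that assms(1) monomial_support by blast+
    then have "1 \<le> i \<and> i < a \<and> a < b \<and> b \<le> n \<and> e (i, a) \<ge> 1 \<and> e (i, b) \<ge> 1"
      using that by (auto simp: var_index_def)
    then show False
      using assms(2) unfolding forkless_def by blast
  qed
  show "j = j'"
  proof (rule ccontr)
    assume "j \<noteq> j'"
    then have "j < j' \<or> j' < j"
      by arith
    then show False
      using fork assms(3,4) by blast
  qed
qed

lemma finite_monomials_of_degree: "finite {e \<in> monomials n. total_degree n e = k}"
proof -
  have "e p \<le> k" if "total_degree n e = k" "p \<in> var_index n" for e p
    using that member_le_sum[OF \<open>p \<in> var_index n\<close> _ finite_var_index, of e]
    by (simp add: total_degree_def)
  then have "{e \<in> monomials n. total_degree n e = k} \<subseteq>
      {e. \<forall>p. (p \<in> var_index n \<longrightarrow> e p \<in> {..k}) \<and> (p \<notin> var_index n \<longrightarrow> e p = 0)}"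
    by (auto simp: monomials_def)
  then show ?thesis
    by (rule finite_subset) (intro finite_set_of_finite_funs finite_var_index finite_atMost)
qed

lemma total_degree_upd:
  assumes "p \<in> var_index n" "e p = 0"
  shows "total_degree n (e(p := a)) = total_degree n e + a"
  using assms finite_var_index
  by (simp add: total_degree_def sum.remove[of _ p] sum.If_cases)

lemma forkless_dvd:
  assumes "e \<in> monomials n" "forkless n e" "\<And>p. d p \<le> e p"
  shows "d \<in> monomials n" "forkless n d"
proof -
  have "d p = 0" if "e p = 0" for p
    using assms(3)[of p] that by simp
  then show "d \<in> monomials n"
    using assms(1) unfolding monomials_def by blast
  have "1 \<le> e p" if "1 \<le> d p" for p
    using assms(3)[of p] that by linarith
  then show "forkless n d"
    using assms(2) unfolding forkless_def by blast
qed

definition forkless_rows :: "nat \<Rightarrow> nat set \<Rightarrow> (nat \<times> nat \<Rightarrow> nat) set" where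
  "forkless_rows n I = {e \<in> monomials n. forkless n e \<and> (\<forall>i j. e (i, j) \<noteq> 0 \<longrightarrow> i \<in> I)}"

definition forkless_rows_of_degree :: "nat \<Rightarrow> nat set \<Rightarrow> nat \<Rightarrow> (nat \<times> nat \<Rightarrow> nat) set" where
  "forkless_rows_of_degree n I k = {e \<in> forkless_rows n I. total_degree n e = k}"

lemma forkless_rows_mono: "I \<subseteq> J \<Longrightarrow> forkless_rows n I \<subseteq> forkless_rows n J"
  unfolding forkless_rows_def by blast

lemma forkless_rows_row_zero: "e \<in> forkless_rows n I \<Longrightarrow> i \<notin> I \<Longrightarrow> e (i, j) = 0"
  unfolding forkless_rows_def by blast

lemma forkless_rows_empty: "forkless_rows n {} = {\<lambda>_. 0}"
proof -
  have "e = (\<lambda>_. 0)" if "e \<in> forkless_rows n {}" for e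
    using that unfolding forkless_rows_def by fastforce
  moreover have "(\<lambda>_. 0) \<in> forkless_rows n {}"
    unfolding forkless_rows_def monomials_def forkless_def by simp
  ultimately show ?thesis
    by blast
qed

lemma forkless_rows_all: "forkless_rows n {1..<n} = {e \<in> monomials n. forkless n e}"
  unfolding forkless_rows_def by (auto dest: monomial_support simp: var_index_def)

lemma finite_forkless_rows_of_degree: "finite (forkless_rows_of_degree n I k)"
  by (rule finite_subset[OF _ finite_monomials_of_degree[of n k]])
    (auto simp: forkless_rows_of_degree_def forkless_rows_def)

lemma forkless_rows_upd:
  assumes e: "e \<in> forkless_rows n I" and "i \<notin> I" and ij: "(i, j) \<in> var_index n"
  shows "e((i, j) := a) \<in> forkless_rows n (insert i I)"
proof -
  let ?e = "e((i, j) := a)"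
  have row: "e (i, j') = 0" for j'
    using e \<open>i \<notin> I\<close> by (rule forkless_rows_row_zero)
  have "e \<in> monomials n" "forkless n e"
    using e by (auto simp: forkless_rows_def)
  have "?e \<in> monomials n"
    using \<open>e \<in> monomials n\<close> ij unfolding monomials_def by auto
  moreover have "forkless n ?e"
    unfolding forkless_def
  proof clarify
    fix i' j' k'
    assume "1 \<le> i'" "i' < j'" "j' < k'" "k' \<le> n" "1 \<le> ?e (i', j')" "1 \<le> ?e (i', k')"
    moreover have "i' \<noteq> i"
      using row \<open>j' < k'\<close> \<open>1 \<le> ?e (i', j')\<close> \<open>1 \<le> ?e (i', k')\<close>
      by (metis fun_upd_apply less_irrefl not_one_le_zero prod.inject)
    ultimately show False
      using \<open>forkless n e\<close> unfolding forkless_def by auto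
  qed
  moreover have "?e (i', j') \<noteq> 0 \<Longrightarrow> i' \<in> insert i I" for i' j'
    using e unfolding forkless_rows_def by (auto split: if_splits)
  ultimately show ?thesis
    unfolding forkless_rows_def by blast
qed

lemma forkless_rows_clear:
  assumes "e \<in> forkless_rows n (insert i I)" "e (i, j) \<noteq> 0"
  shows "e((i, j) := 0) \<in> forkless_rows n I"
proof -
  have "e \<in> monomials n" "forkless n e"
    using assms(1) by (auto simp: forkless_rows_def)
  moreover have "(e((i, j) := 0)) p \<le> e p" for p
    by simp
  ultimately have "e((i, j) := 0) \<in> monomials n" "forkless n (e((i, j) := 0))"
    using forkless_dvd by blast+
  moreover have "e (i, j') = 0" if "j' \<noteq> j" for j'
    using forkless_row_unique[OF \<open>e \<in> monomials n\<close> \<open>forkless n e\<close> assms(2)] that by blast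
  ultimately show ?thesis
    using assms(1) unfolding forkless_rows_def by auto
qed

text \<open>Adjoining row \<open>i\<close>: a monomial of degree \<open>k\<close> either has an empty row \<open>i\<close>, or it arises from
  one of degree \<open>m < k\<close> by giving its unique entry \<open>(i, j)\<close> of row \<open>i\<close> the exponent \<open>k - m\<close>.\<close>

lemma forkless_rows_of_degree_insert:
  assumes "i \<notin> I" "1 \<le> i"
  shows "forkless_rows_of_degree n (insert i I) k = forkless_rows_of_degree n I k \<union>
    (\<lambda>((j, m), e). e((i, j) := k - m)) `
      Sigma ({i<..n} \<times> {..<k}) (\<lambda>(j, m). forkless_rows_of_degree n I m)"
    (is "?D = ?Z \<union> ?f ` ?S")
proof (intro equalityI subsetI)
  fix e
  assume "e \<in> ?D"
  then have e: "e \<in> forkless_rows n (insert i I)" "total_degree n e = k"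
    by (auto simp: forkless_rows_of_degree_def)
  show "e \<in> ?Z \<union> ?f ` ?S"
  proof (cases "\<exists>j. e (i, j) \<noteq> 0")
    case False
    then have "e \<in> forkless_rows n I"
      using e(1) unfolding forkless_rows_def by blast
    then show ?thesis
      using e(2) by (simp add: forkless_rows_of_degree_def)
  next
    case True
    then obtain j where "e (i, j) \<noteq> 0" by blast
    let ?e = "e((i, j) := 0)"
    have ij: "(i, j) \<in> var_index n"
      using e(1) \<open>e (i, j) \<noteq> 0\<close> monomial_support by (auto simp: forkless_rows_def)
    have "e = ?e((i, j) := e (i, j))"
      by simp
    moreover have "total_degree n e = total_degree n ?e + e (i, j)"
      using total_degree_upd[OF ij, of ?e "e (i, j)"] by simp
    ultimately have "e = ?f ((j, total_degree n ?e), ?e)"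
      using e(2) by simp
    moreover have "((j, total_degree n ?e), ?e) \<in> ?S"
      using forkless_rows_clear[OF e(1) \<open>e (i, j) \<noteq> 0\<close>] ij e(2)
        \<open>total_degree n e = total_degree n ?e + e (i, j)\<close> \<open>e (i, j) \<noteq> 0\<close>
      by (auto simp: forkless_rows_of_degree_def var_index_def)
    ultimately show ?thesis
      by blast
  qed
next
  fix e
  assume "e \<in> ?Z \<union> ?f ` ?S"
  then show "e \<in> ?D"
  proof
    assume "e \<in> ?Z"
    then show ?thesis
      using forkless_rows_mono[of I "insert i I" n] by (auto simp: forkless_rows_of_degree_def)
  next
    assume "e \<in> ?f ` ?S"
    then obtain j m e' where jm: "i < j" "j \<le> n" "m < k"
      and e': "e' \<in> forkless_rows n I" "total_degree n e' = m" and e_def: "e = e'((i, j) := k - m)"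
      by (auto simp: forkless_rows_of_degree_def)
    have ij: "(i, j) \<in> var_index n"
      using jm assms(2) by (simp add: var_index_def)
    have "e' (i, j) = 0"
      using e'(1) assms(1) by (rule forkless_rows_row_zero)
    then have "total_degree n e = k"
      using total_degree_upd[OF ij] e'(2) jm(3) e_def by simp
    then show ?thesis
      using forkless_rows_upd[OF e'(1) assms(1) ij] e_def by (simp add: forkless_rows_of_degree_def)
  qed
qed

lemma inj_on_set_row_entry:
  assumes "i \<notin> I"
  shows "inj_on (\<lambda>((j, m), e). e((i, j) := k - m))
    (Sigma ({i<..n} \<times> {..<k}) (\<lambda>(j, m). forkless_rows_of_degree n I m))"
    (is "inj_on ?f ?S")
proof (rule inj_onI)
  fix x y
  assume "x \<in> ?S" "y \<in> ?S" "?f x = ?f y"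
  moreover obtain j m e j' m' e' where xy: "x = ((j, m), e)" "y = ((j', m'), e')"
    by (metis prod.collapse)
  ultimately have "m < k" "m' < k" "e \<in> forkless_rows n I" "e' \<in> forkless_rows n I"
    and eq: "e((i, j) := k - m) = e'((i, j') := k - m')"
    by (auto simp: forkless_rows_of_degree_def)
  then have "e (i, j) = 0" "e' (i, j) = 0"
    using assms forkless_rows_row_zero by blast+
  moreover have "k - m = (e'((i, j') := k - m')) (i, j)"
    using eq by (metis fun_upd_same)
  ultimately have "j' = j" "m' = m"
    using \<open>m < k\<close> \<open>m' < k\<close> by (auto split: if_splits)
  then show "x = y"
    using eq xy \<open>e (i, j) = 0\<close> \<open>e' (i, j) = 0\<close> by (metis fun_upd_triv fun_upd_upd)
qed

lemma card_forkless_rows_of_degree_insert: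
  assumes "i \<notin> I" "1 \<le> i"
  shows "card (forkless_rows_of_degree n (insert i I) k) =
    card (forkless_rows_of_degree n I k) + (n - i) * (\<Sum>m<k. card (forkless_rows_of_degree n I m))"
proof -
  let ?Z = "forkless_rows_of_degree n I k"
  let ?f = "\<lambda>((j, m), e). e((i, j) := k - m)"
  let ?S = "Sigma ({i<..n} \<times> {..<k}) (\<lambda>(j, m). forkless_rows_of_degree n I m)"
  have "?f x \<notin> ?Z" if "x \<in> ?S" for x
  proof -
    obtain j m e where x: "x = ((j, m), e)"
      by (metis prod.collapse)
    with that have "m < k"
      by auto
    then have "e((i, j) := k - m) \<notin> forkless_rows n I"
      using assms(1) forkless_rows_row_zero[of "e((i, j) := k - m)" n I i j] by auto
    with x show ?thesis
      by (simp add: forkless_rows_of_degree_def)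
  qed
  then have "?Z \<inter> ?f ` ?S = {}"
    by blast
  moreover have "finite ?S"
    by (auto intro: finite_forkless_rows_of_degree)
  ultimately have "card (forkless_rows_of_degree n (insert i I) k) = card ?Z + card ?S"
    by (simp add: forkless_rows_of_degree_insert[OF assms] card_Un_disjoint card_image
        inj_on_set_row_entry[OF assms(1)] finite_forkless_rows_of_degree)
  also have "card ?S = (\<Sum>(j, m) \<in> {i<..n} \<times> {..<k}. card (forkless_rows_of_degree n I m))"
    by (simp add: card_SigmaI finite_forkless_rows_of_degree split_beta)
  also have "\<dots> = (n - i) * (\<Sum>m<k. card (forkless_rows_of_degree n I m))"
    by (simp add: sum.cartesian_product[symmetric])
  finally show ?thesis .
qed

lemma fps_partial_sums_mult_one_minus_X:
  fixes c :: "nat \<Rightarrow> 'a::comm_ring_1"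
  shows "Abs_fps (\<lambda>k. \<Sum>m<k. c m) * (1 - fps_X) = fps_X * Abs_fps c"
proof (rule fps_ext)
  fix k
  have "Abs_fps (\<lambda>k. \<Sum>m<k. c m) * (1 - fps_X) =
      Abs_fps (\<lambda>k. \<Sum>m<k. c m) - fps_X * Abs_fps (\<lambda>k. \<Sum>m<k. c m)"
    by (simp add: algebra_simps)
  then show "fps_nth (Abs_fps (\<lambda>k. \<Sum>m<k. c m) * (1 - fps_X)) k = fps_nth (fps_X * Abs_fps c) k"
    by (cases k) simp_all
qed

definition forkless_rows_series :: "nat \<Rightarrow> nat set \<Rightarrow> int fps" where
  "forkless_rows_series n I = Abs_fps (\<lambda>k. int (card (forkless_rows_of_degree n I k)))"

lemma forkless_rows_series_empty: "forkless_rows_series n {} = 1"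
proof (rule fps_ext)
  fix k
  have "forkless_rows_of_degree n {} k = (if k = 0 then {\<lambda>_. 0} else {})"
    by (auto simp: forkless_rows_of_degree_def forkless_rows_empty total_degree_def)
  then show "fps_nth (forkless_rows_series n {}) k = fps_nth 1 k"
    by (simp add: forkless_rows_series_def)
qed

lemma forkless_rows_series_insert:
  assumes "i \<notin> I" "1 \<le> i" "i < n"
  shows "forkless_rows_series n (insert i I) * (1 - fps_X) =
    (1 + of_nat (n - i - 1) * fps_X) * forkless_rows_series n I"
proof -
  let ?S = "forkless_rows_series n I"
  let ?P = "Abs_fps (\<lambda>k. \<Sum>m<k. int (card (forkless_rows_of_degree n I m)))"
  have "forkless_rows_series n (insert i I) = ?S + fps_const (int (n - i)) * ?P"
    by (rule fps_ext)
      (simp add: forkless_rows_series_def card_forkless_rows_of_degree_insert[OF assms(1,2)])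
  also have "int (n - i) = int (n - i - 1) + 1"
    using assms(3) by simp
  also have "fps_const (int (n - i - 1) + 1) = of_nat (n - i - 1) + 1"
    by (metis fps_const_add fps_const_1_eq_1 fps_of_nat)
  finally have "forkless_rows_series n (insert i I) * (1 - fps_X) =
      ?S * (1 - fps_X) + (of_nat (n - i - 1) + 1) * (?P * (1 - fps_X))"
    by (simp add: algebra_simps)
  also have "?P * (1 - fps_X) = fps_X * ?S"
    by (simp add: fps_partial_sums_mult_one_minus_X forkless_rows_series_def)
  finally show ?thesis
    by (simp add: algebra_simps)
qed

lemma forkless_rows_series_mult_power:
  assumes "finite I" "I \<subseteq> {1..<n}"
  shows "forkless_rows_series n I * (1 - fps_X) ^ card I =
    (\<Prod>i\<in>I. 1 + of_nat (n - i - 1) * fps_X)"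
  using assms
proof (induction I rule: finite_induct)
  case empty
  then show ?case
    by (simp add: forkless_rows_series_empty)
next
  case (insert i I)
  have step: "forkless_rows_series n (insert i I) * (1 - fps_X) =
      (1 + of_nat (n - i - 1) * fps_X) * forkless_rows_series n I"
    using insert(2,4) by (intro forkless_rows_series_insert) auto
  have "forkless_rows_series n (insert i I) * (1 - fps_X) ^ card (insert i I) =
      forkless_rows_series n (insert i I) * (1 - fps_X) * (1 - fps_X) ^ card I"
    using insert(1,2) by (simp add: mult.assoc)
  also have "\<dots> = (1 + of_nat (n - i - 1) * fps_X) * (forkless_rows_series n I * (1 - fps_X) ^ card I)"
    by (simp only: step mult.assoc)
  also have "\<dots> = (\<Prod>i\<in>insert i I. 1 + of_nat (n - i - 1) * fps_X)"
    using insert by simp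
  finally show ?case .
qed

lemma f_count_series: "Abs_fps (\<lambda>k. int (f_count n k)) = forkless_rows_series n {1..<n}"
proof -
  have "f_count n k = card (forkless_rows_of_degree n {1..<n} k)" for k
    unfolding f_count_def forkless_rows_of_degree_def forkless_rows_all
    by (rule arg_cong[where f = card]) blast
  then show ?thesis
    by (simp add: forkless_rows_series_def)
qed

theorem proposition4p13:
  fixes n :: nat
  assumes "n \<ge> 1"
  shows "Abs_fps (\<lambda>k. int (f_count n k)) * (1 - fps_X) ^ (n - 1)
           = (\<Prod>i<n - 1. 1 + of_nat i * fps_X :: int fps)"
proof -
  have "Abs_fps (\<lambda>k. int (f_count n k)) * (1 - fps_X) ^ (n - 1) =
      (\<Prod>i\<in>{1..<n}. 1 + of_nat (n - i - 1) * fps_X)"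
    using forkless_rows_series_mult_power[of "{1..<n}" n] by (simp add: f_count_series)
  also have "\<dots> = (\<Prod>i<n - 1. 1 + of_nat i * fps_X)"
    by (rule prod.reindex_bij_witness[where i = "\<lambda>i. n - 1 - i" and j = "\<lambda>i. n - 1 - i"]) auto
  finally show ?thesis .
qed

end
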